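(* Let $i,j$ be integers with $0\leq j\leq i$. Then $$\sum_{\lambda\in O(i,j)}(-1)^{ol(\lambda)}\,q^{|\lambda|+ol(\lambda)\,(i-\ell(\lambda)+1)}\,q^{(i-\ell(\lambda))(j-\ell(\lambda))}=1,$$ where $O(i,j)$ is the set of overpartitions defined in the context.
   Context: An overpartition with $k$ nonnegative parts is a sequence $\lambda=(\lambda_1,\dots,\lambda_k)$ of integers with $\lambda_1\geq\cdots\geq\lambda_k\geq 0$ in which the first occurrence (leftmost position) of each value may or may not be marked as "overlined" (the value $0$ may also be overlined); thus overlined parts have distinct values. Its size is $|\lambda|=\sum_r\lambda_r$, its length $\ell(\lambda)=k$ counts all parts including zeros, and $ol(\lambda)$ is the number of overlined parts. For $0\leq k\leq j$, $O(i,j,k)$ denotes the set of overpartitions $\lambda$ with exactly $k$ nonnegative parts such that (1) every part is at most $j-1$; and (2) when $k\geq 2$, for each $1\leq s\leq k-1$ and each position $r$ with $\lambda_r=j-s$, at least $k-s$ of the parts $\lambda_{r+1},\dots,\lambda_k$ are overlined. (The paper views each overline of an element of $O(i,j,k)$ as carrying weight $w(\lambda)=i-k+1$; this appears as the factor $i-\ell(\lambda)+1$ in the exponent.) $O(i,0,0)$ consists only of the empty partition, and $O(i,j)=\biguplus_{k=0}^{j}O(i,j,k)$. *)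

theory Defs
  imports Main
begin

text \<open>An overpartition with k nonnegative parts is represented as a list of length k of
pairs (value, overlined).\<close>

type_synonym overpartition = "(nat \<times> bool) list"

definition is_overpartition :: "overpartition \<Rightarrow> bool" where
  "is_overpartition xs \<longleftrightarrow>
     sorted_wrt (\<lambda>a b. fst b \<le> fst a) xs \<and>
     (\<forall>r < length xs. snd (xs ! r) \<longrightarrow> (\<forall>r' < r. fst (xs ! r') \<noteq> fst (xs ! r)))"

definition op_size :: "overpartition \<Rightarrow> nat" where
  "op_size xs = (\<Sum>r<length xs. fst (xs ! r))"

definition op_ol :: "overpartition \<Rightarrow> nat" where
  "op_ol xs = card {r. r < length xs \<and> snd (xs ! r)}"

text \<open>O(i,j,k) (positions 0-indexed: position r has later parts r+1,...,k-1).
The set does not actually depend on i.\<close>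
definition O3 :: "nat \<Rightarrow> nat \<Rightarrow> nat \<Rightarrow> overpartition set" where
  "O3 i j k = {xs. is_overpartition xs \<and> length xs = k \<and> k \<le> j \<and>
     (\<forall>r < k. fst (xs ! r) + 1 \<le> j) \<and>
     (2 \<le> k \<longrightarrow> (\<forall>s \<in> {1..k-1}. \<forall>r < k. fst (xs ! r) = j - s \<longrightarrow>
         k - s \<le> card {t. r < t \<and> t < k \<and> snd (xs ! t)}))}"

definition O2 :: "nat \<Rightarrow> nat \<Rightarrow> overpartition set" where
  "O2 i j = (\<Union>k \<in> {0..j}. O3 i j k)"

end

theory Submission
  imports Defs
begin

text \<open>Condition (2) with \<open>s = j - \<lambda>\<^sub>r\<close> says exactly that
\<open>\<lambda>\<^sub>r \<le> (j - k) + #{overlined parts after r}\<close>, so \<open>O(i,j)\<close> is the set of overpartitions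
of length at most \<open>j\<close> obeying this bound; in particular it does not depend on \<open>i\<close>.
Split this set according to its last part. If all parts are positive, subtracting one from
every part gives a bijection with the same set for \<open>j - 1\<close>, and the weight changes by
\<open>q\<^sup>i\<close>. If the last part is a plain \<open>0\<close>, deleting it gives the set for \<open>j - 1\<close> with weight
parameter \<open>i - 1\<close>; if it is an overlined \<open>0\<close>, deleting it leaves an element of the first
kind, with weight parameter \<open>i - 1\<close> and a factor \<open>-q\<close>. Writing \<open>F(i,j)\<close> for the sum,
this yields \<open>F(i,j+1) = q\<^sup>i F(i,j) + (1 - q\<^sup>i) F(i-1,j)\<close>, and \<open>F = 1\<close> follows by
induction on \<open>j\<close>.\<close>

definition ol_after :: "overpartition \<Rightarrow> nat \<Rightarrow> nat" where
  "ol_after xs r = card {t. r < t \<and> t < length xs \<and> snd (xs ! t)}"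

definition admissible :: "nat \<Rightarrow> overpartition set" where
  "admissible j = {xs. is_overpartition xs \<and> length xs \<le> j \<and>
     (\<forall>r<length xs. fst (xs ! r) \<le> (j - length xs) + ol_after xs r)}"

definition admissible_pos :: "nat \<Rightarrow> overpartition set" where
  "admissible_pos j = {xs \<in> admissible j. \<forall>x\<in>set xs. 0 < fst x}"

definition op_weight :: "'a::comm_ring_1 \<Rightarrow> nat \<Rightarrow> nat \<Rightarrow> overpartition \<Rightarrow> 'a" where
  "op_weight q i j lam = (-1) ^ op_ol lam *
     q ^ (op_size lam + op_ol lam * (i - length lam + 1)) *
     q ^ ((i - length lam) * (j - length lam))"

definition weight_sum :: "'a::comm_ring_1 \<Rightarrow> nat \<Rightarrow> nat \<Rightarrow> 'a" where
  "weight_sum q i j = (\<Sum>xs\<in>admissible j. op_weight q i j xs)"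

lemma ol_after_le: "ol_after xs r \<le> length xs - Suc r"
proof -
  have "ol_after xs r \<le> card {Suc r..<length xs}"
    unfolding ol_after_def by (intro card_mono) auto
  then show ?thesis by simp
qed

lemma ol_after_eq_0: "length xs \<le> Suc r \<Longrightarrow> ol_after xs r = 0"
  using ol_after_le[of xs r] by simp

lemma ol_after_map_apfst: "ol_after (map (apfst f) xs) r = ol_after xs r"
  unfolding ol_after_def by (intro arg_cong[where f = card] Collect_cong) auto

lemma card_snoc_filter:
  "card {t. P t \<and> t < length (ys @ [x]) \<and> Q ((ys @ [x]) ! t)} =
   card {t. P t \<and> t < length ys \<and> Q (ys ! t)} + (if P (length ys) \<and> Q x then 1 else 0)"
proof -
  let ?A = "{t. P t \<and> t < length ys \<and> Q (ys ! t)}"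
  have "finite ?A" by (rule finite_subset[of _ "{..<length ys}"]) auto
  moreover have "{t. P t \<and> t < length (ys @ [x]) \<and> Q ((ys @ [x]) ! t)} =
      (if P (length ys) \<and> Q x then insert (length ys) ?A else ?A)"
    by (auto simp: nth_append less_Suc_eq)
  ultimately show ?thesis by auto
qed

lemma ol_after_snoc:
  "r < length ys \<Longrightarrow> ol_after (ys @ [x]) r = ol_after ys r + (if snd x then 1 else 0)"
  unfolding ol_after_def using card_snoc_filter[of "\<lambda>t. r < t" ys x snd] by simp

lemma op_ol_snoc: "op_ol (ys @ [x]) = op_ol ys + (if snd x then 1 else 0)"
  unfolding op_ol_def using card_snoc_filter[of "\<lambda>_. True" ys x snd] by simp

lemma op_size_snoc: "op_size (ys @ [x]) = op_size ys + fst x"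
  unfolding op_size_def by (simp add: nth_append)

lemma op_ol_map_apfst: "op_ol (map (apfst f) ys) = op_ol ys"
  unfolding op_ol_def by (intro arg_cong[where f = card] Collect_cong) auto

lemma op_size_map_apfst_Suc: "op_size (map (apfst Suc) ys) = op_size ys + length ys"
  unfolding op_size_def by (simp add: sum_Suc)

lemma is_overpartition_snoc:
  "is_overpartition (ys @ [x]) \<longleftrightarrow> is_overpartition ys \<and>
     (\<forall>y\<in>set ys. fst x \<le> fst y) \<and> (snd x \<longrightarrow> (\<forall>y\<in>set ys. fst y \<noteq> fst x))"
  unfolding is_overpartition_def sorted_wrt_append
  by (auto simp: nth_append less_Suc_eq all_set_conv_all_nth)

lemma is_overpartition_map_apfst:
  "strict_mono f \<Longrightarrow> is_overpartition (map (apfst f) ys) \<longleftrightarrow> is_overpartition ys"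
  unfolding is_overpartition_def sorted_wrt_map
  by (simp add: strict_mono_less_eq strict_mono_eq)

lemma last_le_if_overpartition:
  "is_overpartition xs \<Longrightarrow> x \<in> set xs \<Longrightarrow> fst (last xs) \<le> fst x"
proof (induction xs rule: rev_induct)
  case (snoc y ys)
  then show ?case by (auto simp: is_overpartition_snoc)
qed simp

subsection \<open>The set \<open>O(i,j)\<close>\<close>

lemma part_bound_iff:
  assumes "r < k" "k \<le> j" "c \<le> k - Suc r"
  shows "v \<le> (j - k) + c \<longleftrightarrow>
    v + 1 \<le> j \<and> (2 \<le> k \<longrightarrow> (\<forall>s\<in>{1..k-1}. v = j - s \<longrightarrow> k - s \<le> c))"
proof
  assume "v \<le> (j - k) + c"
  then show "v + 1 \<le> j \<and> (2 \<le> k \<longrightarrow> (\<forall>s\<in>{1..k-1}. v = j - s \<longrightarrow> k - s \<le> c))"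
    using assms by auto
next
  assume bound: "v + 1 \<le> j \<and> (2 \<le> k \<longrightarrow> (\<forall>s\<in>{1..k-1}. v = j - s \<longrightarrow> k - s \<le> c))"
  show "v \<le> (j - k) + c"
  proof (cases "v \<le> j - k")
    case False
    then have s: "j - v \<in> {1..k-1}" and "2 \<le> k" using bound assms by auto
    then have "v = j - (j - v) \<longrightarrow> k - (j - v) \<le> c" using bound by blast
    then show ?thesis using bound by linarith
  qed simp
qed

lemma in_O3_length_iff: "xs \<in> O3 i j (length xs) \<longleftrightarrow> xs \<in> admissible j"
proof (cases "length xs \<le> j")
  case True
  let ?k = "length xs"
  have "(\<forall>r<?k. fst (xs ! r) \<le> (j - ?k) + ol_after xs r) \<longleftrightarrow>
      (\<forall>r<?k. fst (xs ! r) + 1 \<le> j \<and>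
        (2 \<le> ?k \<longrightarrow> (\<forall>s\<in>{1..?k-1}. fst (xs ! r) = j - s \<longrightarrow> ?k - s \<le> ol_after xs r)))"
    using part_bound_iff[OF _ True ol_after_le] by blast
  also have "\<dots> \<longleftrightarrow> (\<forall>r<?k. fst (xs ! r) + 1 \<le> j) \<and>
      (2 \<le> ?k \<longrightarrow> (\<forall>s\<in>{1..?k-1}. \<forall>r<?k. fst (xs ! r) = j - s \<longrightarrow> ?k - s \<le> ol_after xs r))"
    by blast
  finally show ?thesis
    using True unfolding O3_def admissible_def ol_after_def by auto
next
  case False
  then show ?thesis unfolding O3_def admissible_def by auto
qed

lemma O3_eq: "O3 i j k = {xs \<in> admissible j. length xs = k}"
  using in_O3_length_iff[of _ i j] by (auto simp: O3_def)

lemma O2_eq_admissible: "O2 i j = admissible j"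
  unfolding O2_def O3_eq by (auto simp: admissible_def)

lemma finite_admissible: "finite (admissible j)"
proof -
  have "admissible j \<subseteq> {xs. set xs \<subseteq> {..j + j} \<times> UNIV \<and> length xs \<le> j}"
  proof
    fix xs assume xs: "xs \<in> admissible j"
    then have "length xs \<le> j" unfolding admissible_def by simp
    moreover have "set xs \<subseteq> {..j + j} \<times> UNIV"
    proof
      fix x assume "x \<in> set xs"
      then obtain r where "r < length xs" "x = xs ! r" by (auto simp: in_set_conv_nth)
      then show "x \<in> {..j + j} \<times> UNIV"
        using xs ol_after_le[of xs r] unfolding admissible_def by (cases x) force
    qed
    ultimately show "xs \<in> {xs. set xs \<subseteq> {..j + j} \<times> UNIV \<and> length xs \<le> j}" by simp
  qed
  moreover have "finite {xs. set xs \<subseteq> {..j + j} \<times> (UNIV :: bool set) \<and> length xs \<le> j}"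
    by (rule finite_lists_length_le) auto
  ultimately show ?thesis by (rule finite_subset)
qed

subsection \<open>Decomposition according to the last part\<close>

lemma snoc_zero_in_admissible_iff:
  "ys @ [(0, b)] \<in> admissible j \<longleftrightarrow>
     is_overpartition ys \<and> (b \<longrightarrow> (\<forall>y\<in>set ys. 0 < fst y)) \<and> length ys < j \<and>
     (\<forall>r<length ys. fst (ys ! r) \<le> (j - Suc (length ys)) + ol_after ys r + (if b then 1 else 0))"
  unfolding admissible_def
  by (auto simp: is_overpartition_snoc nth_append less_Suc_eq ol_after_snoc ol_after_eq_0)

lemma snoc_plain_zero_in_admissible_iff:
  "ys @ [(0, False)] \<in> admissible j \<longleftrightarrow> 1 \<le> j \<and> ys \<in> admissible (j - 1)"
  by (subst snoc_zero_in_admissible_iff) (auto simp: admissible_def)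

lemma snoc_overlined_zero_in_admissible_iff:
  "ys @ [(0, True)] \<in> admissible j \<longleftrightarrow> ys \<in> admissible_pos j \<and> length ys < j"
  by (subst snoc_zero_in_admissible_iff) (auto simp: admissible_pos_def admissible_def)

lemma last_part_eq_0_if_admissible:
  assumes "xs \<in> admissible j" "length xs = j" "1 \<le> j"
  shows "fst (xs ! (j - 1)) = 0"
proof -
  have "fst (xs ! (j - 1)) \<le> (j - length xs) + ol_after xs (j - 1)"
    using assms unfolding admissible_def by auto
  then show ?thesis using assms ol_after_eq_0[of xs "j - 1"] by simp
qed

lemma length_less_if_admissible_pos:
  assumes "xs \<in> admissible_pos j" "1 \<le> j"
  shows "length xs < j"
proof (rule ccontr)
  assume "\<not> length xs < j"
  with assms(1) have len: "length xs = j" unfolding admissible_pos_def admissible_def by auto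
  have "xs \<in> admissible j" using assms(1) unfolding admissible_pos_def by simp
  then have "fst (xs ! (j - 1)) = 0" by (rule last_part_eq_0_if_admissible[OF _ len assms(2)])
  moreover have "xs ! (j - 1) \<in> set xs" using len assms(2) by simp
  ultimately show False using assms(1) unfolding admissible_pos_def by fastforce
qed

lemma map_Suc_in_admissible_iff:
  assumes "1 \<le> j"
  shows "map (apfst Suc) ys \<in> admissible j \<longleftrightarrow> ys \<in> admissible (j - 1)"
proof
  assume shifted: "map (apfst Suc) ys \<in> admissible j"
  have "length ys \<noteq> j"
    using last_part_eq_0_if_admissible[OF shifted] assms by auto
  with shifted show "ys \<in> admissible (j - 1)"
    unfolding admissible_def
    by (auto simp: is_overpartition_map_apfst strict_mono_Suc_iff ol_after_map_apfst)
next
  assume "ys \<in> admissible (j - 1)"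
  with assms show "map (apfst Suc) ys \<in> admissible j"
    unfolding admissible_def
    by (auto simp: is_overpartition_map_apfst strict_mono_Suc_iff ol_after_map_apfst)
qed

lemma admissible_pos_eq_image:
  assumes "1 \<le> j"
  shows "admissible_pos j = map (apfst Suc) ` admissible (j - 1)"
proof
  show "admissible_pos j \<subseteq> map (apfst Suc) ` admissible (j - 1)"
  proof
    fix xs assume xs: "xs \<in> admissible_pos j"
    let ?ys = "map (apfst (\<lambda>v. v - 1)) xs"
    have shift: "map (apfst Suc) ?ys = xs"
      unfolding map_map
    proof (rule map_idI)
      fix x assume "x \<in> set xs"
      with xs have "0 < fst x" unfolding admissible_pos_def by blast
      then show "(apfst Suc \<circ> apfst (\<lambda>v. v - 1)) x = x" by (cases x) simp
    qed
    with xs have "map (apfst Suc) ?ys \<in> admissible j" unfolding admissible_pos_def by simp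
    then have "?ys \<in> admissible (j - 1)" using map_Suc_in_admissible_iff[OF assms] by blast
    with shift show "xs \<in> map (apfst Suc) ` admissible (j - 1)" by (metis image_eqI)
  qed
  show "map (apfst Suc) ` admissible (j - 1) \<subseteq> admissible_pos j"
    using map_Suc_in_admissible_iff[OF assms] unfolding admissible_pos_def by auto
qed

lemma admissible_split:
  assumes "1 \<le> j"
  shows "admissible j = admissible_pos j \<union>
    ((\<lambda>ys. ys @ [(0, False)]) ` admissible (j - 1) \<union> (\<lambda>ys. ys @ [(0, True)]) ` admissible_pos j)"
    (is "_ = _ \<union> (?plain \<union> ?overlined)")
proof
  show "admissible_pos j \<union> (?plain \<union> ?overlined) \<subseteq> admissible j"
    using snoc_plain_zero_in_admissible_iff snoc_overlined_zero_in_admissible_iff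
      length_less_if_admissible_pos assms
    unfolding admissible_pos_def by auto
  show "admissible j \<subseteq> admissible_pos j \<union> (?plain \<union> ?overlined)"
  proof
    fix xs assume xs: "xs \<in> admissible j"
    show "xs \<in> admissible_pos j \<union> (?plain \<union> ?overlined)"
    proof (cases "\<forall>x\<in>set xs. 0 < fst x")
      case True
      with xs show ?thesis unfolding admissible_pos_def by auto
    next
      case False
      then obtain x where x: "x \<in> set xs" "fst x = 0" by auto
      have "is_overpartition xs" using xs unfolding admissible_def by simp
      then have "fst (last xs) = 0" using last_le_if_overpartition[OF _ x(1)] x(2) by simp
      moreover have "xs = butlast xs @ [last xs]" using x(1) by (cases xs rule: rev_cases) auto
      ultimately obtain ys b where ys: "xs = ys @ [(0, b)]" by (metis prod.collapse)
      show ?thesis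
      proof (cases b)
        case True
        then have "ys \<in> admissible_pos j"
          using xs ys snoc_overlined_zero_in_admissible_iff by simp
        with ys True show ?thesis by blast
      next
        case False
        then have "ys \<in> admissible (j - 1)"
          using xs ys snoc_plain_zero_in_admissible_iff by simp
        with ys False show ?thesis by blast
      qed
    qed
  qed
qed

lemma op_weight_eq:
  assumes "i = length lam + a" "j = length lam + b"
  shows "op_weight q i j lam = (-1) ^ op_ol lam * q ^ (op_size lam + op_ol lam * (a + 1) + a * b)"
  using assms unfolding op_weight_def by (simp add: power_add)

lemma op_weight_map_Suc:
  assumes "length ys < j" "length ys \<le> i"
  shows "op_weight q i j (map (apfst Suc) ys) = q ^ i * op_weight q i (j - 1) ys"
proof -
  obtain a b where i: "i = length ys + a" and j: "j = length ys + Suc b"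
    using assms by (metis le_iff_add less_iff_Suc_add add_Suc_right)
  have "op_size ys + length ys + op_ol ys * (a + 1) + a * Suc b =
        i + (op_size ys + op_ol ys * (a + 1) + a * b)"
    using i by (simp add: algebra_simps)
  then show ?thesis
    using op_weight_eq[of i "map (apfst Suc) ys" a j "Suc b" q] op_weight_eq[of i ys a "j - 1" b q] i j
    by (simp add: op_size_map_apfst_Suc op_ol_map_apfst power_add mult_ac)
qed

lemma op_weight_snoc_plain_zero:
  "op_weight q i j (ys @ [(0, False)]) = op_weight q (i - 1) (j - 1) ys"
  unfolding op_weight_def op_size_snoc op_ol_snoc by simp

lemma op_weight_snoc_overlined_zero:
  assumes "length ys < j" "j \<le> i"
  shows "op_weight q i j (ys @ [(0, True)]) = - q * op_weight q (i - 1) j ys"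
proof -
  obtain a b where i: "i = Suc (length ys) + a" and j: "j = Suc (length ys) + b"
    using assms by (metis le_iff_add less_iff_Suc_add add_Suc order.trans)
  have "op_size ys + Suc (op_ol ys) * (a + 1) + a * b =
        1 + (op_size ys + op_ol ys * (a + 1) + a * Suc b)"
    by (simp add: algebra_simps)
  then show ?thesis
    using op_weight_eq[of i "ys @ [(0, True)]" a j b q] op_weight_eq[of "i - 1" ys a j "Suc b" q] i j
    by (simp add: op_size_snoc op_ol_snoc power_add mult_ac)
qed

subsection \<open>The recurrence\<close>

lemma sum_admissible_pos:
  assumes "1 \<le> j" "j \<le> i + 1"
  shows "(\<Sum>xs\<in>admissible_pos j. op_weight q i j xs) = q ^ i * weight_sum q i (j - 1)"
proof -
  have "inj_on (map (apfst Suc)) (admissible (j - 1))"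
    by (intro inj_on_subset[OF inj_mapI]) simp_all
  then have "(\<Sum>xs\<in>admissible_pos j. op_weight q i j xs) =
      (\<Sum>ys\<in>admissible (j - 1). op_weight q i j (map (apfst Suc) ys))"
    unfolding admissible_pos_eq_image[OF assms(1)] by (simp add: sum.reindex)
  also have "\<dots> = (\<Sum>ys\<in>admissible (j - 1). q ^ i * op_weight q i (j - 1) ys)"
    using assms by (intro sum.cong refl op_weight_map_Suc) (auto simp: admissible_def)
  finally show ?thesis unfolding weight_sum_def by (simp add: sum_distrib_left)
qed

lemma weight_sum_Suc:
  assumes "Suc j \<le> i"
  shows "weight_sum q i (Suc j) = q ^ i * weight_sum q i j + (1 - q ^ i) * weight_sum q (i - 1) j"
proof -
  let ?plain = "(\<lambda>ys. ys @ [(0, False)]) ` admissible j"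
  let ?overlined = "(\<lambda>ys. ys @ [(0, True)]) ` admissible_pos (Suc j)"
  have fin: "finite (admissible_pos (Suc j))" "finite (admissible j)"
    using finite_admissible unfolding admissible_pos_def by auto
  have inj: "inj_on (\<lambda>ys. ys @ [x]) A" for x :: "nat \<times> bool" and A by (simp add: inj_on_def)
  have plain: "(\<Sum>xs\<in>?plain. op_weight q i (Suc j) xs) = weight_sum q (i - 1) j"
    unfolding weight_sum_def by (simp add: sum.reindex[OF inj] op_weight_snoc_plain_zero)
  have "(\<Sum>xs\<in>?overlined. op_weight q i (Suc j) xs) =
      (\<Sum>ys\<in>admissible_pos (Suc j). - q * op_weight q (i - 1) (Suc j) ys)"
    using length_less_if_admissible_pos[of _ "Suc j"] assms
    by (simp add: sum.reindex[OF inj] op_weight_snoc_overlined_zero)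
  also have "\<dots> = - q * (q ^ (i - 1) * weight_sum q (i - 1) j)"
    using sum_admissible_pos[of "Suc j" "i - 1" q] assms by (simp add: sum_negf sum_distrib_left[symmetric])
  also have "\<dots> = - (q ^ i * weight_sum q (i - 1) j)"
    using assms by (cases i) auto
  finally have overlined: "(\<Sum>xs\<in>?overlined. op_weight q i (Suc j) xs) =
      - (q ^ i * weight_sum q (i - 1) j)" .
  have "admissible_pos (Suc j) \<inter> (?plain \<union> ?overlined) = {}" "?plain \<inter> ?overlined = {}"
    unfolding admissible_pos_def by auto
  then have "weight_sum q i (Suc j) = (\<Sum>xs\<in>admissible_pos (Suc j). op_weight q i (Suc j) xs) +
      ((\<Sum>xs\<in>?plain. op_weight q i (Suc j) xs) + (\<Sum>xs\<in>?overlined. op_weight q i (Suc j) xs))"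
    unfolding weight_sum_def admissible_split[of "Suc j", simplified]
    using fin by (simp add: sum.union_disjoint)
  then show ?thesis
    using plain overlined sum_admissible_pos[of "Suc j" i q] assms by (simp add: algebra_simps)
qed

lemma weight_sum_eq_1: "j \<le> i \<Longrightarrow> weight_sum q i j = 1"
proof (induction j arbitrary: i)
  case 0
  have "admissible 0 = {[]}" by (auto simp: admissible_def is_overpartition_def)
  then show ?case by (simp add: weight_sum_def op_weight_def op_ol_def op_size_def)
next
  case (Suc j)
  then show ?case by (simp add: weight_sum_Suc)
qed

theorem theorem3p1:
  fixes i j :: nat and q :: "'a :: comm_ring_1"
  assumes "j \<le> i"
  shows "(\<Sum>lam\<in>O2 i j. (-1) ^ op_ol lam *
            q ^ (op_size lam + op_ol lam * (i - length lam + 1)) *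
            q ^ ((i - length lam) * (j - length lam))) = 1"
  using weight_sum_eq_1[OF assms, of q] unfolding weight_sum_def op_weight_def O2_eq_admissible .

end
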